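(* Let $f\in\mathcal{F}(\Delta,L)$ with $x_1=x_0$, let the stochastic oracle have variance at most $\sigma^2$, and let $G=\sqrt{L^2+\sigma^2}$. Run Stochastic INGD (described in the context) with parameters $\beta\in(0,1)$, $p>0$, $q>0$ satisfying $\frac{pG}{q}\le\frac{\beta}{2}$. Then for every $T\ge1$, $$\frac1T\sum_{t=1}^T\mathbb{E}\Big[\frac{q\|m_t\|^2}{p\|m_t\|+q}\Big]\le\frac{4q\Delta}{T}+\frac{2\beta G^2}{T(1-\beta)}+\frac{2(1-\beta)G^2}{\beta}.$$
   Context: $\mathcal{F}(\Delta,L)$: $L$-Lipschitz, everywhere Hadamard directionally differentiable $f:\mathbb{R}^n\to\mathbb{R}$ with $f(x_0)-\inf f\le\Delta$. Hadamard directional derivative: $f'(x;d)=\lim_{t\to0^+}(f(\varphi(t))-f(x))/t$ for all $\varphi$ with $\varphi(0)=x$, $\lim_{t\to 0^+}(\varphi(t)-x)/t=d$. Stochastic oracle: $\mathbb{O}(x,d)$ returns (with fresh randomness, independent of the past given the query) a random vector $g$ with $\mathbb{E}[g]=g_x$, where $g_x\in\partial f(x)$ (Clarke generalized gradient) satisfies $\langle g_x,d\rangle=f'(x;d)$, and $\mathbb{E}\|g-g_x\|^2\le\sigma^2$; no function values are returned. Stochastic INGD$(x_1,p,q,\beta,T,K)$: set $m_1$ to the output of $\mathbb{O}(x_1,0)$; for $t=1,\dots,T$: $x_{t+1}=x_t-\eta_t m_t$ with $\eta_t=\frac{1}{p\|m_t\|+q}$; sample $y_{t+1}$ uniformly on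 the segment $[x_t,x_{t+1}]$; let $g(y_{t+1})$ be the output of $\mathbb{O}(y_{t+1},-m_t)$; set $m_{t+1}=\beta m_t+(1-\beta)g(y_{t+1})$. Finally sample $i$ uniformly from $\{1,\dots,T\}$ and return $x_{\max\{i-K,1\}}$. *)

theory Defs
  imports "HOL-Analysis.Analysis" "HOL-Probability.Probability"
begin

definition has_hadamard_dd :: "('a::real_normed_vector \<Rightarrow> real) \<Rightarrow> 'a \<Rightarrow> 'a \<Rightarrow> real \<Rightarrow> bool" where
  "has_hadamard_dd f x d v \<longleftrightarrow>
     (\<forall>\<phi>. \<phi> 0 = x \<longrightarrow> ((\<lambda>t. (1 / t) *\<^sub>R (\<phi> t - x)) \<longlongrightarrow> d) (at_right 0) \<longrightarrow>
          ((\<lambda>t. (f (\<phi> t) - f x) / t) \<longlongrightarrow> v) (at_right 0))"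

definition hadamard_dir_differentiable :: "('a::real_normed_vector \<Rightarrow> real) \<Rightarrow> bool" where
  "hadamard_dir_differentiable f \<longleftrightarrow> (\<forall>x d. \<exists>v. has_hadamard_dd f x d v)"

definition clarke_dd :: "('a::real_normed_vector \<Rightarrow> real) \<Rightarrow> 'a \<Rightarrow> 'a \<Rightarrow> ereal" where
  "clarke_dd f x d = Limsup (nhds x \<times>\<^sub>F at_right (0::real))
       (\<lambda>(y, t). ereal ((f (y + t *\<^sub>R d) - f y) / t))"

definition clarke_subdiff :: "('a::real_inner \<Rightarrow> real) \<Rightarrow> 'a \<Rightarrow> 'a set" where
  "clarke_subdiff f x = {g. \<forall>d. ereal (g \<bullet> d) \<le> clarke_dd f x d}"

definition ingd_step ::
  "('a::euclidean_space \<Rightarrow> 'a \<Rightarrow> 'a measure) \<Rightarrow> real \<Rightarrow> real \<Rightarrow> real \<Rightarrow> 'a \<times> 'a \<Rightarrow> ('a \<times> 'a) measure" where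
  "ingd_step Orc p q \<beta> s =
     (let x = fst s; m = snd s; x' = x - (1 / (p * norm m + q)) *\<^sub>R m in
      uniform_measure lborel {0..1::real} \<bind> (\<lambda>u.
        Orc (x + u *\<^sub>R (x' - x)) (- m) \<bind> (\<lambda>g.
          return borel (x', \<beta> *\<^sub>R m + (1 - \<beta>) *\<^sub>R g))))"

text \<open>ingd_state Orc p q beta x1 n is the joint law of (x_{n+1}, m_{n+1}), i.e. index n = t - 1.
  m_1 is the output of Orc(x_1, 0).\<close>
fun ingd_state ::
  "('a::euclidean_space \<Rightarrow> 'a \<Rightarrow> 'a measure) \<Rightarrow> real \<Rightarrow> real \<Rightarrow> real \<Rightarrow> 'a \<Rightarrow> nat \<Rightarrow> ('a \<times> 'a) measure" where
  "ingd_state Orc p q \<beta> x1 0 = distr (Orc x1 0) borel (\<lambda>g. (x1, g))"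
| "ingd_state Orc p q \<beta> x1 (Suc n) = ingd_state Orc p q \<beta> x1 n \<bind> ingd_step Orc p q \<beta>"

end

(*
  Descent is measured by the potential
    Phi(x, m) = f(x) - inf f + Psi(|m|) / (2 (1 - beta)),
  where Psi(r) = (2/p) r - (2q/p^2) ln(1 + p r / q) is the antiderivative of 2r/(pr + q).
  Psi is chosen so that Psi(r') <= Psi(r) + (r'^2 - r^2) / (p r + q): after the momentum update
  m' = beta m + (1 - beta) g, its growth is controlled by the inner product <m, g> and by
  |g - m|^2, with exactly the normalisation eta = 1 / (p |m| + q) of the step.  Because y is
  uniform on the segment [x, x - eta m] and the oracle is unbiased with E<g(y), -m> equal to the
  Hadamard directional derivative, the expected inner product integrates to f(x') - f(x).
  The two contributions cancel up to a constant, giving the drift inequality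
    E Phi(x', m') + (1 + beta^2)/2 * |m|^2 / (p |m| + q) <= Phi(x, m) + (1 - beta^2) G^2 / (2 beta q),
  which telescopes over T steps; Phi at the start is at most Delta + G^2 / (2 q (1 - beta)).
*)

theory Submission
  imports Defs
begin

section \<open>Telescoping drift inequalities\<close>

lemma nn_integral_drift_telescope:
  fixes P \<phi> :: "'b \<Rightarrow> ennreal"
  assumes S: "\<And>n. S n \<in> space (prob_algebra N)"
    and S_Suc: "\<And>n. S (Suc n) = S n \<bind> k"
    and k: "k \<in> N \<rightarrow>\<^sub>M prob_algebra N"
    and [measurable]: "P \<in> borel_measurable N" "\<phi> \<in> borel_measurable N"
    and drift: "\<And>s. s \<in> space N \<Longrightarrow> (\<integral>\<^sup>+ s'. P s' \<partial>k s) + \<phi> s \<le> P s + K"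
  shows "(\<integral>\<^sup>+ s. P s \<partial>S n) + (\<Sum>t<n. \<integral>\<^sup>+ s. \<phi> s \<partial>S t) \<le> (\<integral>\<^sup>+ s. P s \<partial>S 0) + of_nat n * K"
proof (induction n)
  case (Suc n)
  have sets: "sets (S n) = sets N" and "prob_space (S n)"
    using S[of n] by (auto simp: space_prob_algebra)
  have k_S: "k \<in> S n \<rightarrow>\<^sub>M subprob_algebra N"
    using measurable_prob_algebraD[OF k] sets by (simp cong: measurable_cong_sets)
  have [measurable]: "P \<in> borel_measurable (S n)" "\<phi> \<in> borel_measurable (S n)"
    using sets by (simp_all cong: measurable_cong_sets)
  have "(\<lambda>s. \<integral>\<^sup>+ s'. P s' \<partial>k s) \<in> borel_measurable (S n)"
    by (rule measurable_compose[OF k_S nn_integral_measurable_subprob_algebra]) measurable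
  moreover have "(\<integral>\<^sup>+ s. P s \<partial>S (Suc n)) = (\<integral>\<^sup>+ s. (\<integral>\<^sup>+ s'. P s' \<partial>k s) \<partial>S n)"
    unfolding S_Suc by (rule nn_integral_bind[OF _ k_S]) measurable
  ultimately have "(\<integral>\<^sup>+ s. P s \<partial>S (Suc n)) + (\<integral>\<^sup>+ s. \<phi> s \<partial>S n)
      = (\<integral>\<^sup>+ s. (\<integral>\<^sup>+ s'. P s' \<partial>k s) + \<phi> s \<partial>S n)"
    by (simp add: nn_integral_add)
  also have "\<dots> \<le> (\<integral>\<^sup>+ s. P s + K \<partial>S n)"
    by (rule nn_integral_mono) (use drift sets_eq_imp_space_eq[OF sets] in auto)
  also have "\<dots> = (\<integral>\<^sup>+ s. P s \<partial>S n) + K"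
    using prob_space.emeasure_space_1[OF \<open>prob_space (S n)\<close>] by (simp add: nn_integral_add)
  finally have step: "(\<integral>\<^sup>+ s. P s \<partial>S (Suc n)) + (\<integral>\<^sup>+ s. \<phi> s \<partial>S n) \<le> (\<integral>\<^sup>+ s. P s \<partial>S n) + K" .
  have "(\<integral>\<^sup>+ s. P s \<partial>S (Suc n)) + (\<Sum>t<Suc n. \<integral>\<^sup>+ s. \<phi> s \<partial>S t)
      = ((\<integral>\<^sup>+ s. P s \<partial>S (Suc n)) + (\<integral>\<^sup>+ s. \<phi> s \<partial>S n)) + (\<Sum>t<n. \<integral>\<^sup>+ s. \<phi> s \<partial>S t)"
    by (simp add: add_ac)
  also have "\<dots> \<le> ((\<integral>\<^sup>+ s. P s \<partial>S n) + K) + (\<Sum>t<n. \<integral>\<^sup>+ s. \<phi> s \<partial>S t)"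
    using step by (rule add_right_mono)
  also have "\<dots> = ((\<integral>\<^sup>+ s. P s \<partial>S n) + (\<Sum>t<n. \<integral>\<^sup>+ s. \<phi> s \<partial>S t)) + K"
    by (simp add: add_ac)
  also have "\<dots> \<le> (\<integral>\<^sup>+ s. P s \<partial>S 0) + of_nat (Suc n) * K"
    using add_right_mono[OF Suc.IH, of K] by (simp add: add_ac distrib_right)
  finally show ?case .
qed simp

section \<open>The INGD transition kernel\<close>

lemma ingd_step_measurable:
  fixes Orc :: "'a::euclidean_space \<Rightarrow> 'a \<Rightarrow> 'a measure"
  assumes orc_meas: "(\<lambda>(x, d). Orc x d) \<in> borel \<rightarrow>\<^sub>M prob_algebra borel"
  shows "ingd_step Orc p q \<beta> \<in> borel \<rightarrow>\<^sub>M prob_algebra borel"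
proof -
  have orc: "(\<lambda>x. Orc (fst x) (snd x)) \<in> borel \<Otimes>\<^sub>M borel \<rightarrow>\<^sub>M prob_algebra borel"
    using orc_meas by (simp add: case_prod_beta' borel_prod)
  have uniform: "uniform_measure lborel {0..1::real} \<in> space (prob_algebra borel)"
    by (auto simp: space_prob_algebra intro!: prob_space_uniform_measure)
  have "(\<lambda>x. (fst (fst x) + snd x *\<^sub>R
          ((fst (fst x) - (1 / (p * norm (snd (fst x)) + q)) *\<^sub>R snd (fst x)) - fst (fst x)),
        - snd (fst x)))
      \<in> (borel \<Otimes>\<^sub>M borel) \<Otimes>\<^sub>M (borel :: real measure) \<rightarrow>\<^sub>M (borel \<Otimes>\<^sub>M borel :: ('a \<times> 'a) measure)"
    by measurable
  from measurable_compose[OF this orc]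
  have query: "(\<lambda>x. Orc (fst (fst x) + snd x *\<^sub>R
          ((fst (fst x) - (1 / (p * norm (snd (fst x)) + q)) *\<^sub>R snd (fst x)) - fst (fst x)))
        (- snd (fst x)))
      \<in> (borel \<Otimes>\<^sub>M borel) \<Otimes>\<^sub>M (borel :: real measure) \<rightarrow>\<^sub>M prob_algebra borel"
    by simp
  have update: "(\<lambda>x. return borel
        (fst (fst (fst x)) - (1 / (p * norm (snd (fst (fst x))) + q)) *\<^sub>R snd (fst (fst x)),
         \<beta> *\<^sub>R snd (fst (fst x)) + (1 - \<beta>) *\<^sub>R snd x))
      \<in> ((borel \<Otimes>\<^sub>M borel) \<Otimes>\<^sub>M (borel :: real measure)) \<Otimes>\<^sub>M borel
        \<rightarrow>\<^sub>M prob_algebra (borel :: ('a \<times> 'a) measure)"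
    by (rule measurable_compose[OF _ measurable_return_prob_space])
      (unfold borel_prod[symmetric], measurable)
  have "ingd_step Orc p q \<beta> \<in> borel \<Otimes>\<^sub>M borel \<rightarrow>\<^sub>M prob_algebra borel"
    unfolding ingd_step_def Let_def
    by (rule measurable_bind_prob_space2[where N=borel] measurable_const[OF uniform] query update
        | simp only: case_prod_unfold)+
  then show ?thesis
    by (simp add: borel_prod)
qed

lemma ingd_state_prob_algebra:
  fixes Orc :: "'a::euclidean_space \<Rightarrow> 'a \<Rightarrow> 'a measure"
  assumes orc_dist: "\<forall>x d. Orc x d \<in> space (prob_algebra borel)"
    and orc_meas: "(\<lambda>(x, d). Orc x d) \<in> borel \<rightarrow>\<^sub>M prob_algebra borel"
  shows "ingd_state Orc p q \<beta> x1 n \<in> space (prob_algebra borel)"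
proof (induction n)
  case 0
  have "(\<lambda>g. (x1, g)) \<in> (borel :: 'a measure) \<rightarrow>\<^sub>M borel"
    unfolding borel_prod[symmetric] by measurable
  from measurable_space[OF measurable_distr_prob_space[OF this]] orc_dist show ?case
    by simp
next
  case (Suc n)
  have "(\<lambda>_::unit. ingd_state Orc p q \<beta> x1 n \<bind> ingd_step Orc p q \<beta>) \<in> count_space UNIV \<rightarrow>\<^sub>M prob_algebra borel"
    using ingd_step_measurable[OF orc_meas] Suc by (intro measurable_bind_prob_space measurable_const)
  from measurable_space[OF this] show ?case
    by simp
qed

lemma nn_integral_ingd_step:
  fixes Orc :: "'a::euclidean_space \<Rightarrow> 'a \<Rightarrow> 'a measure" and F :: "'a \<times> 'a \<Rightarrow> ennreal"
  assumes orc_meas: "(\<lambda>(x, d). Orc x d) \<in> borel \<rightarrow>\<^sub>M prob_algebra borel"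
    and [measurable]: "F \<in> borel_measurable borel"
    and \<eta>: "\<eta> = 1 / (p * norm m + q)"
  shows "(\<integral>\<^sup>+ s. F s \<partial>ingd_step Orc p q \<beta> (x, m))
    = (\<integral>\<^sup>+ u. (\<integral>\<^sup>+ g. F (x - \<eta> *\<^sub>R m, \<beta> *\<^sub>R m + (1 - \<beta>) *\<^sub>R g) \<partial>Orc (x - (u * \<eta>) *\<^sub>R m) (- m))
        \<partial>uniform_measure lborel {0..1})"
proof -
  define U where "U = uniform_measure lborel {0..1::real}"
  define query where "query u = Orc (x - (u * \<eta>) *\<^sub>R m) (- m)" for u
  define update where "update g = return borel (x - \<eta> *\<^sub>R m, \<beta> *\<^sub>R m + (1 - \<beta>) *\<^sub>R g)" for g
  have orc: "(\<lambda>x. Orc (fst x) (snd x)) \<in> borel \<Otimes>\<^sub>M borel \<rightarrow>\<^sub>M prob_algebra borel"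
    using orc_meas by (simp add: case_prod_beta' borel_prod)
  have "(\<lambda>u::real. (x - (u * \<eta>) *\<^sub>R m, - m)) \<in> borel \<rightarrow>\<^sub>M borel \<Otimes>\<^sub>M borel"
    by measurable
  from measurable_compose[OF this orc] have query: "query \<in> borel \<rightarrow>\<^sub>M prob_algebra borel"
    unfolding query_def by simp
  have update: "update \<in> borel \<rightarrow>\<^sub>M prob_algebra borel"
    unfolding update_def by (rule measurable_compose[OF _ measurable_return_prob_space]) measurable
  have "(\<lambda>u. query u \<bind> update) \<in> borel \<rightarrow>\<^sub>M prob_algebra borel"
    by (rule measurable_bind_prob_space[OF query update])
  then have "(\<lambda>u. query u \<bind> update) \<in> U \<rightarrow>\<^sub>M subprob_algebra borel"
    unfolding U_def by (simp add: measurable_prob_algebraD cong: measurable_cong_sets)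
  moreover have "ingd_step Orc p q \<beta> (x, m) = U \<bind> (\<lambda>u. query u \<bind> update)"
    unfolding ingd_step_def Let_def U_def query_def update_def \<eta> by (simp add: algebra_simps)
  ultimately have "(\<integral>\<^sup>+ s. F s \<partial>ingd_step Orc p q \<beta> (x, m)) = (\<integral>\<^sup>+ u. (\<integral>\<^sup>+ s. F s \<partial>(query u \<bind> update)) \<partial>U)"
    by (simp add: nn_integral_bind[where B=borel])
  also have "\<dots> = (\<integral>\<^sup>+ u. (\<integral>\<^sup>+ g. F (x - \<eta> *\<^sub>R m, \<beta> *\<^sub>R m + (1 - \<beta>) *\<^sub>R g) \<partial>query u) \<partial>U)"
  proof (intro nn_integral_cong)
    fix u
    have "sets (query u) = sets borel"
      using measurable_space[OF query] by (simp add: space_prob_algebra)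
    then have "update \<in> query u \<rightarrow>\<^sub>M subprob_algebra borel"
      using measurable_prob_algebraD[OF update] by (simp cong: measurable_cong_sets)
    then show "(\<integral>\<^sup>+ s. F s \<partial>(query u \<bind> update)) = (\<integral>\<^sup>+ g. F (x - \<eta> *\<^sub>R m, \<beta> *\<^sub>R m + (1 - \<beta>) *\<^sub>R g) \<partial>query u)"
      by (simp add: nn_integral_bind[where B=borel] nn_integral_return update_def)
  qed
  finally show ?thesis
    unfolding U_def query_def .
qed

section \<open>Integrating one-sided derivatives along a segment\<close>

lemma difference_quotient_has_integral:
  fixes A \<phi> :: "real \<Rightarrow> real"
  assumes A: "\<And>v. v \<in> {0..1 + h} \<Longrightarrow> (A has_real_derivative \<phi> v) (at v)" and h: "0 \<le> h"
  shows "((\<lambda>u. (\<phi> (u + h) - \<phi> u) / h) has_integral ((A (1 + h) - A 1) - (A h - A 0)) / h) {0..1}"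
proof -
  have "((\<lambda>u. A (u + h)) has_vector_derivative \<phi> (u + h)) (at u within {0..1})"
    if "u \<in> {0..1}" for u
    using A[of "u + h"] that h
    by (simp add: DERIV_shift has_real_derivative_iff_has_vector_derivative[symmetric]
        has_field_derivative_at_within)
  then have shifted: "((\<lambda>u. \<phi> (u + h)) has_integral A (1 + h) - A h) {0..1}"
    using fundamental_theorem_of_calculus[of 0 1 "\<lambda>u. A (u + h)"] by simp
  have "(A has_vector_derivative \<phi> u) (at u within {0..1})" if "u \<in> {0..1}" for u
    using A[of u] that h
    by (simp add: has_real_derivative_iff_has_vector_derivative[symmetric] has_field_derivative_at_within)
  then have "(\<phi> has_integral A 1 - A 0) {0..1}"
    using fundamental_theorem_of_calculus[of 0 1 A] by simp
  from has_integral_divide[OF has_integral_diff[OF shifted this], of h] show ?thesis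
    by (rule has_integral_eq_rhs) (simp add: diff_divide_distrib)
qed

lemma difference_quotient_integrals_tendsto:
  fixes \<phi> :: "real \<Rightarrow> real" and h :: "nat \<Rightarrow> real"
  assumes cont: "continuous_on UNIV \<phi>" and h: "\<And>k. 0 < h k \<and> h k \<le> 1"
    and h_lim: "filterlim h (at_right 0) sequentially"
  obtains I where "\<And>k. ((\<lambda>u. (\<phi> (u + h k) - \<phi> u) / h k) has_integral I k) {0..1}"
    and "I \<longlonglongrightarrow> \<phi> 1 - \<phi> 0"
proof
  define A where "A v = integral {-1..v} \<phi>" for v
  have A': "(A has_real_derivative \<phi> v) (at v)" if "v \<in> {-1<..<3}" for v
  proof -
    have "(A has_real_derivative \<phi> v) (at v within {-1..3})"
      unfolding A_def
      by (rule integral_has_real_derivative) (use cont that in \<open>auto intro: continuous_on_subset\<close>)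
    moreover have "at v within {-1..3} = at v"
      using that by (intro at_within_interior) auto
    ultimately show ?thesis by simp
  qed
  have A_quotient: "(\<lambda>k. (A (a + h k) - A a) / h k) \<longlonglongrightarrow> \<phi> a" if "a \<in> {-1<..<3}" for a
  proof -
    have "((\<lambda>t. (A (a + t) - A a) / t) \<longlongrightarrow> \<phi> a) (at 0)"
      using A'[OF that] by (simp add: DERIV_def)
    moreover have "filterlim h (at 0) sequentially"
      by (rule filterlim_mono[OF h_lim]) (simp_all add: at_within_le_at)
    ultimately show ?thesis
      using filterlim_compose by fastforce
  qed
  show "((\<lambda>u. (\<phi> (u + h k) - \<phi> u) / h k) has_integral ((A (1 + h k) - A 1) - (A (h k) - A 0)) / h k) {0..1}"
    for k
    using h[of k] by (intro difference_quotient_has_integral A') auto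
  show "(\<lambda>k. ((A (1 + h k) - A 1) - (A (h k) - A 0)) / h k) \<longlonglongrightarrow> \<phi> 1 - \<phi> 0"
    using tendsto_diff[OF A_quotient[of 1] A_quotient[of 0]] by (simp add: diff_divide_distrib)
qed

lemma lipschitz_right_derivative_has_integral:
  fixes \<phi> D :: "real \<Rightarrow> real"
  assumes lip: "lipschitz_on K UNIV \<phi>"
    and der: "\<And>u. u \<in> {0..1} \<Longrightarrow> ((\<lambda>t. (\<phi> (u + t) - \<phi> u) / t) \<longlongrightarrow> D u) (at_right 0)"
  shows "(D has_integral (\<phi> 1 - \<phi> 0)) {0..1}"
proof -
  define h where "h k = 1 / real (Suc k)" for k
  have h: "0 < h k \<and> h k \<le> 1" for k
    unfolding h_def by (auto simp: field_simps)
  have h_lim: "filterlim h (at_right 0) sequentially"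
    unfolding h_def using LIMSEQ_inverse_real_of_nat
    by (intro tendsto_imp_filterlim_at_right) (auto simp: inverse_eq_divide)
  obtain I where I: "\<And>k. ((\<lambda>u. (\<phi> (u + h k) - \<phi> u) / h k) has_integral I k) {0..1}"
    and I_lim: "I \<longlonglongrightarrow> \<phi> 1 - \<phi> 0"
    using difference_quotient_integrals_tendsto[OF lipschitz_on_continuous_on[OF lip] h h_lim] by blast
  show ?thesis
  proof (rule has_integral_dominated_convergence[OF I _ _ _ I_lim])
    show "(\<lambda>u::real. K) integrable_on {0..1}"
      by (rule integrable_const_ivl)
    show "\<forall>u\<in>{0..1}. norm ((\<phi> (u + h k) - \<phi> u) / h k) \<le> K" for k
    proof
      fix u :: real
      have "\<bar>\<phi> (u + h k) - \<phi> u\<bar> \<le> K * h k"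
        using lipschitz_onD[OF lip, of "u + h k" u] h[of k] by (simp add: dist_real_def)
      then show "norm ((\<phi> (u + h k) - \<phi> u) / h k) \<le> K"
        using h[of k] by (simp add: abs_divide divide_le_eq)
    qed
    show "\<forall>u\<in>{0..1}. (\<lambda>k. (\<phi> (u + h k) - \<phi> u) / h k) \<longlonglongrightarrow> D u"
      using filterlim_compose[OF der h_lim] by blast
  qed
qed

lemma has_hadamard_dd_ray:
  fixes f :: "'a::real_normed_vector \<Rightarrow> real"
  assumes hd: "has_hadamard_dd f y d v" and a: "0 < a"
  shows "((\<lambda>t. (f (y + t *\<^sub>R (a *\<^sub>R d)) - f y) / t) \<longlongrightarrow> a * v) (at_right 0)"
proof -
  have "((\<lambda>t. (1 / t) *\<^sub>R ((y + t *\<^sub>R d) - y)) \<longlongrightarrow> d) (at_right 0)"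
    by (rule tendsto_eventually) (simp add: eventually_mono[OF eventually_at_right_less])
  then have ray: "((\<lambda>t. (f (y + t *\<^sub>R d) - f y) / t) \<longlongrightarrow> v) (at_right 0)"
    using hd unfolding has_hadamard_dd_def by (auto elim!: allE[of _ "\<lambda>t. y + t *\<^sub>R d"])
  have "filterlim (\<lambda>t. a * t) (at_right 0) (at_right (0::real))"
    using a by (intro tendsto_imp_filterlim_at_right)
      (auto intro!: tendsto_eq_intros eventually_mono[OF eventually_at_right_less])
  from tendsto_mult_left[OF filterlim_compose[OF ray this], of a] show ?thesis
    using a by (simp add: mult.commute)
qed

lemma hadamard_segment_has_integral:
  fixes f :: "'a::real_normed_vector \<Rightarrow> real"
  assumes lip: "lipschitz_on L UNIV f" and \<eta>: "0 < \<eta>"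
    and hd: "\<And>u. u \<in> {0..1} \<Longrightarrow> has_hadamard_dd f (x + (u * \<eta>) *\<^sub>R d) d (D u)"
  shows "((\<lambda>u. \<eta> * D u) has_integral f (x + \<eta> *\<^sub>R d) - f x) {0..1}"
proof -
  define \<phi> where "\<phi> u = f (x + (u * \<eta>) *\<^sub>R d)" for u
  have "lipschitz_on (L * (\<eta> * norm d)) UNIV \<phi>"
  proof (rule lipschitz_onI)
    fix a b :: real
    have "dist (\<phi> a) (\<phi> b) \<le> L * dist (x + (a * \<eta>) *\<^sub>R d) (x + (b * \<eta>) *\<^sub>R d)"
      unfolding \<phi>_def by (rule lipschitz_onD[OF lip]) auto
    also have "dist (x + (a * \<eta>) *\<^sub>R d) (x + (b * \<eta>) *\<^sub>R d) = norm (((a - b) * \<eta>) *\<^sub>R d)"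
      by (simp add: dist_norm algebra_simps)
    also have "\<dots> = \<eta> * norm d * dist a b"
      using \<eta> by (simp add: dist_real_def abs_mult)
    finally show "dist (\<phi> a) (\<phi> b) \<le> L * (\<eta> * norm d) * dist a b"
      by (simp add: mult_ac)
  qed (use lipschitz_on_nonneg[OF lip] \<eta> in auto)
  then have "((\<lambda>u. \<eta> * D u) has_integral \<phi> 1 - \<phi> 0) {0..1}"
  proof (rule lipschitz_right_derivative_has_integral)
    fix u :: real assume "u \<in> {0..1}"
    from has_hadamard_dd_ray[OF hd[OF this] \<eta>]
    show "((\<lambda>t. (\<phi> (u + t) - \<phi> u) / t) \<longlongrightarrow> \<eta> * D u) (at_right 0)"
      unfolding \<phi>_def by (simp add: algebra_simps)
  qed
  then show ?thesis
    unfolding \<phi>_def by simp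
qed

lemma nn_integral_uniform_unit_interval:
  fixes B :: "real \<Rightarrow> real"
  assumes "B \<in> borel_measurable borel"
    and "\<And>u. u \<in> {0..1} \<Longrightarrow> 0 \<le> B u" and "(B has_integral I) {0..1}"
  shows "(\<integral>\<^sup>+ u. ennreal (B u) \<partial>uniform_measure lborel {0..1}) = ennreal I"
proof -
  have "(\<integral>\<^sup>+ u. ennreal (B u) \<partial>uniform_measure lborel {0..1})
      = (\<integral>\<^sup>+ u. ennreal (B u) * indicator {0..1} u \<partial>lborel) / emeasure lborel {0..1::real}"
    using assms(1) by (intro nn_integral_uniform_measure) auto
  also have "\<dots> = ennreal I"
    using nn_integral_has_integral_lebesgue'[OF assms(2,3)] by (simp add: divide_ennreal_def)
  finally show ?thesis .
qed

section \<open>Clarke subgradients and oracle moments\<close>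

lemma clarke_subdiff_norm_le:
  fixes f :: "'a::real_inner \<Rightarrow> real"
  assumes lip: "lipschitz_on L UNIV f" and g: "g \<in> clarke_subdiff f x"
  shows "norm g \<le> L"
proof -
  have "clarke_dd f x g \<le> ereal (L * norm g)"
    unfolding clarke_dd_def
  proof (rule Limsup_bounded)
    have "\<forall>\<^sub>F t in at_right (0::real). 0 < t"
      by (simp add: eventually_at_right_less)
    then have "eventually (\<lambda>(y, t). 0 < t) (nhds x \<times>\<^sub>F at_right (0::real))"
      using eventually_prod2[of "nhds x" "\<lambda>t. 0 < t" "at_right (0::real)"] by simp
    then show "\<forall>\<^sub>F n in nhds x \<times>\<^sub>F at_right 0.
        (case n of (y, t) \<Rightarrow> ereal ((f (y + t *\<^sub>R g) - f y) / t)) \<le> ereal (L * norm g)"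
    proof (rule eventually_mono)
      fix n :: "'a \<times> real" assume "case n of (y, t) \<Rightarrow> 0 < t"
      moreover obtain y t where n: "n = (y, t)" by (cases n)
      ultimately have "0 < t" by simp
      have "f (y + t *\<^sub>R g) - f y \<le> L * dist (y + t *\<^sub>R g) y"
        using lipschitz_onD[OF lip, of "y + t *\<^sub>R g" y] by (simp add: dist_real_def)
      with \<open>0 < t\<close> show "(case n of (y, t) \<Rightarrow> ereal ((f (y + t *\<^sub>R g) - f y) / t)) \<le> ereal (L * norm g)"
        unfolding n by (simp add: dist_norm divide_le_eq mult_ac)
    qed
  qed
  moreover have "ereal (g \<bullet> g) \<le> clarke_dd f x g"
    using g by (simp add: clarke_subdiff_def)
  ultimately have "ereal (g \<bullet> g) \<le> ereal (L * norm g)"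
    by (rule order_trans[rotated])
  then have "norm g * norm g \<le> L * norm g"
    by (simp add: power2_norm_eq_inner[symmetric] power2_eq_square)
  then show ?thesis
    using lipschitz_on_nonneg[OF lip] by (cases "norm g = 0") (auto simp: mult_le_cancel_right)
qed

lemma integral_norm_diff_sq_le:
  fixes M :: "'a::euclidean_space measure"
  assumes M: "M \<in> space (prob_algebra borel)" and mean: "has_bochner_integral M (\<lambda>v. v) \<mu>"
    and var: "(\<integral>\<^sup>+v. ennreal ((norm (v - \<mu>))\<^sup>2) \<partial>M) \<le> ennreal (\<sigma>\<^sup>2)"
  shows "integrable M (\<lambda>v. (norm (v - c))\<^sup>2)"
    and "(\<integral>v. (norm (v - c))\<^sup>2 \<partial>M) \<le> (norm (\<mu> - c))\<^sup>2 + \<sigma>\<^sup>2"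
proof -
  interpret prob_space M
    using M by (simp add: space_prob_algebra)
  have [measurable_cong]: "sets M = sets borel"
    using M by (simp add: space_prob_algebra)
  have int_id: "integrable M (\<lambda>v. v)" and mean_eq: "(\<integral>v. v \<partial>M) = \<mu>"
    using mean by (auto intro: integrable.intros has_bochner_integral_integral_eq)
  have int_var: "integrable M (\<lambda>v. (norm (v - \<mu>))\<^sup>2)"
    using var by (intro integrableI_bounded) (simp_all add: order_le_less_trans)
  have "ennreal (\<integral>v. (norm (v - \<mu>))\<^sup>2 \<partial>M) \<le> ennreal (\<sigma>\<^sup>2)"
    using var nn_integral_eq_integral[OF int_var] by simp
  then have var_le: "(\<integral>v. (norm (v - \<mu>))\<^sup>2 \<partial>M) \<le> \<sigma>\<^sup>2"
    by (simp add: ennreal_le_iff)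
  have norm_add_sq: "(norm (a + b))\<^sup>2 = (norm a)\<^sup>2 + 2 * (a \<bullet> b) + (norm b)\<^sup>2" for a b :: 'a
    by (simp add: power2_norm_eq_inner inner_add_left inner_add_right inner_commute)
  have expand: "(\<lambda>v. (norm (v - c))\<^sup>2) = (\<lambda>v. (norm (v - \<mu>))\<^sup>2 + 2 * ((v - \<mu>) \<bullet> (\<mu> - c)) + (norm (\<mu> - c))\<^sup>2)"
  proof
    fix v
    have "(v - \<mu>) + (\<mu> - c) = v - c"
      by simp
    then show "(norm (v - c))\<^sup>2 = (norm (v - \<mu>))\<^sup>2 + 2 * ((v - \<mu>) \<bullet> (\<mu> - c)) + (norm (\<mu> - c))\<^sup>2"
      using norm_add_sq[of "v - \<mu>" "\<mu> - c"] by simp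
  qed
  have int_cross: "integrable M (\<lambda>v. (v - \<mu>) \<bullet> (\<mu> - c))"
    using int_id by (intro integrable_inner_left integrable_diff) auto
  have "(\<integral>v. (v - \<mu>) \<bullet> (\<mu> - c) \<partial>M) = (\<integral>v. v - \<mu> \<partial>M) \<bullet> (\<mu> - c)"
    using int_id by (intro integral_inner_left) auto
  also have "\<dots> = 0"
    using int_id mean_eq by (simp add: prob_space)
  finally have cross: "(\<integral>v. (v - \<mu>) \<bullet> (\<mu> - c) \<partial>M) = 0" .
  show "integrable M (\<lambda>v. (norm (v - c))\<^sup>2)"
    unfolding expand using int_var int_cross by simp
  have "(\<integral>v. (norm (v - c))\<^sup>2 \<partial>M) = (\<integral>v. (norm (v - \<mu>))\<^sup>2 \<partial>M) + (norm (\<mu> - c))\<^sup>2"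
    unfolding expand using int_var int_cross cross by (simp add: prob_space)
  then show "(\<integral>v. (norm (v - c))\<^sup>2 \<partial>M) \<le> (norm (\<mu> - c))\<^sup>2 + \<sigma>\<^sup>2"
    using var_le by simp
qed

lemma nn_integral_le_quadratic_majorant:
  fixes M :: "'a::euclidean_space measure" and F :: "'a \<Rightarrow> real"
  assumes M: "M \<in> space (prob_algebra borel)" and mean: "has_bochner_integral M (\<lambda>v. v) \<mu>"
    and var: "(\<integral>\<^sup>+v. ennreal ((norm (v - \<mu>))\<^sup>2) \<partial>M) \<le> ennreal (\<sigma>\<^sup>2)"
    and F_nonneg: "\<And>g. 0 \<le> F g"
    and F_le: "\<And>g. F g \<le> C + a \<bullet> g + \<kappa> * (norm (g - m))\<^sup>2"
    and \<kappa>: "0 \<le> \<kappa>"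
  shows "(\<integral>\<^sup>+g. ennreal (F g) \<partial>M) \<le> ennreal (C + a \<bullet> \<mu> + \<kappa> * ((norm (\<mu> - m))\<^sup>2 + \<sigma>\<^sup>2))"
    and "0 \<le> C + a \<bullet> \<mu> + \<kappa> * ((norm (\<mu> - m))\<^sup>2 + \<sigma>\<^sup>2)"
proof -
  interpret prob_space M
    using M by (simp add: space_prob_algebra)
  define R where "R g = C + a \<bullet> g + \<kappa> * (norm (g - m))\<^sup>2" for g
  note second_moment = integral_norm_diff_sq_le[OF M mean var, of m]
  have int_id: "integrable M (\<lambda>v. v)" and mean_eq: "(\<integral>v. v \<partial>M) = \<mu>"
    using mean by (auto intro: integrable.intros has_bochner_integral_integral_eq)
  then have int_R: "integrable M R"
    unfolding R_def using second_moment(1)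
    by (intro Bochner_Integration.integrable_add integrable_mult_right integrable_inner_right) auto
  have "(\<integral>g. R g \<partial>M) = C + a \<bullet> \<mu> + \<kappa> * (\<integral>g. (norm (g - m))\<^sup>2 \<partial>M)"
    unfolding R_def using int_id mean_eq second_moment(1) by (simp add: prob_space)
  also have "\<dots> \<le> C + a \<bullet> \<mu> + \<kappa> * ((norm (\<mu> - m))\<^sup>2 + \<sigma>\<^sup>2)"
    using second_moment(2) \<kappa> by (simp add: mult_left_mono)
  finally have R_le: "(\<integral>g. R g \<partial>M) \<le> C + a \<bullet> \<mu> + \<kappa> * ((norm (\<mu> - m))\<^sup>2 + \<sigma>\<^sup>2)" .
  have R_nonneg: "0 \<le> R g" for g
    using F_nonneg[of g] F_le[of g] unfolding R_def by linarith
  have "(\<integral>\<^sup>+g. ennreal (F g) \<partial>M) \<le> (\<integral>\<^sup>+g. ennreal (R g) \<partial>M)"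
    unfolding R_def by (intro nn_integral_mono ennreal_leI F_le)
  also have "\<dots> = ennreal (\<integral>g. R g \<partial>M)"
    using int_R R_nonneg by (intro nn_integral_eq_integral) auto
  finally show "(\<integral>\<^sup>+g. ennreal (F g) \<partial>M) \<le> ennreal (C + a \<bullet> \<mu> + \<kappa> * ((norm (\<mu> - m))\<^sup>2 + \<sigma>\<^sup>2))"
    using R_le by (auto intro: order_trans ennreal_leI)
  show "0 \<le> C + a \<bullet> \<mu> + \<kappa> * ((norm (\<mu> - m))\<^sup>2 + \<sigma>\<^sup>2)"
    using integral_nonneg_AE[of R] R_nonneg R_le by (meson AE_I2 order_trans)
qed

section \<open>The momentum potential\<close>

definition momentum_potential :: "real \<Rightarrow> real \<Rightarrow> real \<Rightarrow> real" where
  "momentum_potential p q r = (2 / p) * r - (2 * q / p\<^sup>2) * ln (1 + p * r / q)"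

lemma momentum_potential_has_real_derivative:
  assumes "0 < p" "0 < q" "0 \<le> s"
  shows "(momentum_potential p q has_real_derivative 2 * s / (p * s + q)) (at s)"
proof -
  have "0 < q + p * s"
    using assms by (simp add: add_pos_nonneg)
  then show ?thesis
    using assms unfolding momentum_potential_def[abs_def]
    by (auto intro!: derivative_eq_intros simp: divide_simps power2_eq_square) (simp add: algebra_simps)
qed

lemma momentum_potential_zero [simp]: "momentum_potential p q 0 = 0"
  by (simp add: momentum_potential_def)

lemma momentum_potential_diff_ge:
  assumes p: "0 < p" and q: "0 < q" and "0 \<le> r" "0 \<le> r'"
  shows "(r\<^sup>2 - r'\<^sup>2) / (p * r + q) \<le> momentum_potential p q r - momentum_potential p q r'"
proof -
  have "0 < p * r + q"
    using assms by (simp add: add_nonneg_pos)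
  define g where "g s = momentum_potential p q s - s\<^sup>2 / (p * r + q)" for s
  define g' where "g' s = 2 * s / (p * s + q) - 2 * s / (p * r + q)" for s
  have g': "(g has_real_derivative g' s) (at s)" if "0 \<le> s" for s
    unfolding g_def[abs_def] g'_def
    using momentum_potential_has_real_derivative[OF p q that] \<open>0 < p * r + q\<close>
    by (auto intro!: derivative_eq_intros)
  have quotient_le: "2 * s / (p * s' + q) \<le> 2 * s / (p * s'' + q)"
    if "0 \<le> s" "s'' \<le> s'" "0 \<le> s''" for s s' s''
  proof (rule divide_left_mono)
    show "0 < (p * s' + q) * (p * s'' + q)"
      using that p q by (intro mult_pos_pos add_nonneg_pos) auto
  qed (use that p in \<open>auto intro: mult_left_mono\<close>)
  have "g r' \<le> g r"
  proof (cases "r' \<le> r")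
    case True
    show ?thesis
    proof (rule DERIV_nonneg_imp_nondecreasing[OF True])
      fix s assume s: "r' \<le> s" "s \<le> r"
      with assms have "0 \<le> s" by linarith
      then show "\<exists>y. (g has_real_derivative y) (at s) \<and> 0 \<le> y"
        using g'[OF \<open>0 \<le> s\<close>] quotient_le[OF \<open>0 \<le> s\<close> s(2) \<open>0 \<le> s\<close>]
        by (intro exI[of _ "g' s"] conjI) (simp_all add: g'_def)
    qed
  next
    case False
    then have "r \<le> r'" by simp
    then show ?thesis
    proof (rule DERIV_nonpos_imp_nonincreasing)
      fix s assume s: "r \<le> s" "s \<le> r'"
      with assms have "0 \<le> s" by linarith
      then show "\<exists>y. (g has_real_derivative y) (at s) \<and> y \<le> 0"
        using g'[OF \<open>0 \<le> s\<close>] quotient_le[OF \<open>0 \<le> s\<close> s(1) \<open>0 \<le> r\<close>]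
        by (intro exI[of _ "g' s"] conjI) (simp_all add: g'_def)
    qed
  qed
  then show ?thesis
    unfolding g_def by (simp add: diff_divide_distrib)
qed

lemma momentum_potential_nonneg:
  assumes "0 < p" "0 < q" "0 \<le> r"
  shows "0 \<le> momentum_potential p q r"
proof -
  have "0 \<le> r\<^sup>2 / (p * r + q)"
    using assms by (simp add: add_nonneg_pos)
  also have "\<dots> \<le> momentum_potential p q r"
    using momentum_potential_diff_ge[OF assms order_refl] by simp
  finally show ?thesis .
qed

lemma momentum_potential_le:
  assumes "0 < p" "0 < q" "0 \<le> r"
  shows "momentum_potential p q r \<le> r\<^sup>2 / q"
  using momentum_potential_diff_ge[OF assms(1,2) order_refl assms(3)] by (simp add: diff_divide_distrib)

lemma momentum_potential_update_le:
  fixes m g :: "'a::real_inner"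
  assumes p: "0 < p" and q: "0 < q" and \<beta>: "\<beta> < 1"
  shows "momentum_potential p q (norm (\<beta> *\<^sub>R m + (1 - \<beta>) *\<^sub>R g)) / (2 * (1 - \<beta>))
    \<le> momentum_potential p q (norm m) / (2 * (1 - \<beta>))
      + (m \<bullet> g - (norm m)\<^sup>2 + (1 - \<beta>) / 2 * (norm (g - m))\<^sup>2) / (p * norm m + q)"
proof -
  define m' where "m' = \<beta> *\<^sub>R m + (1 - \<beta>) *\<^sub>R g"
  define Z where "Z = (m \<bullet> g - (norm m)\<^sup>2 + (1 - \<beta>) / 2 * (norm (g - m))\<^sup>2) / (p * norm m + q)"
  have norm_m': "(norm m')\<^sup>2 - (norm m)\<^sup>2 = 2 * (1 - \<beta>) * (m \<bullet> g - (norm m)\<^sup>2) + (1 - \<beta>)\<^sup>2 * (norm (g - m))\<^sup>2"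
    unfolding m'_def power2_norm_eq_inner
    by (simp add: inner_add_left inner_add_right inner_diff_left inner_diff_right
        inner_commute power2_eq_square algebra_simps)
  have "0 < p * norm m + q"
    using p q by (simp add: add_nonneg_pos)
  then have "((norm m')\<^sup>2 - (norm m)\<^sup>2) / (p * norm m + q) = 2 * (1 - \<beta>) * Z"
    unfolding norm_m' Z_def by (simp add: field_simps power2_eq_square)
  moreover have "((norm m)\<^sup>2 - (norm m')\<^sup>2) / (p * norm m + q)
      \<le> momentum_potential p q (norm m) - momentum_potential p q (norm m')"
    by (rule momentum_potential_diff_ge[OF p q]) auto
  ultimately have "momentum_potential p q (norm m') \<le> momentum_potential p q (norm m) + 2 * (1 - \<beta>) * Z"
    by (simp add: diff_divide_distrib)
  then have "momentum_potential p q (norm m') / (2 * (1 - \<beta>))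
      \<le> (momentum_potential p q (norm m) + 2 * (1 - \<beta>) * Z) / (2 * (1 - \<beta>))"
    using \<beta> by (intro divide_right_mono) auto
  also have "\<dots> = momentum_potential p q (norm m) / (2 * (1 - \<beta>)) + Z"
    using \<beta> by (simp add: field_simps)
  finally show ?thesis
    unfolding m'_def Z_def .
qed

section \<open>Arithmetic of the rate\<close>

lemma power2_add_weighted_le:
  fixes \<beta> L r \<sigma> :: real
  assumes "0 < \<beta>"
  shows "(L + r)\<^sup>2 + \<sigma>\<^sup>2 \<le> (1 + \<beta>) / \<beta> * (L\<^sup>2 + \<sigma>\<^sup>2) + (1 + \<beta>) * r\<^sup>2"
proof -
  have "(1 + \<beta>) / \<beta> * (L\<^sup>2 + \<sigma>\<^sup>2) + (1 + \<beta>) * r\<^sup>2 - ((L + r)\<^sup>2 + \<sigma>\<^sup>2) = ((L - \<beta> * r)\<^sup>2 + \<sigma>\<^sup>2) / \<beta>"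
    using assms by (simp add: field_simps power2_eq_square)
  moreover have "0 \<le> ((L - \<beta> * r)\<^sup>2 + \<sigma>\<^sup>2) / \<beta>"
    using assms by simp
  ultimately show ?thesis
    by linarith
qed

lemma drift_constant_bound:
  fixes \<beta> p q r L \<sigma> :: real
  assumes \<beta>: "0 < \<beta>" "\<beta> < 1" and p: "0 < p" and q: "0 < q" and r: "0 \<le> r"
  shows "(1 - \<beta>) / 2 * ((L + r)\<^sup>2 + \<sigma>\<^sup>2) / (p * r + q)
    \<le> (1 - \<beta>\<^sup>2) * (L\<^sup>2 + \<sigma>\<^sup>2) / (2 * \<beta> * q) + (1 - \<beta>\<^sup>2) / 2 * (r\<^sup>2 / (p * r + q))"
proof -
  have pos: "0 < p * r + q"
    using p q r by (simp add: add_nonneg_pos)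
  have "(1 - \<beta>) / 2 * ((L + r)\<^sup>2 + \<sigma>\<^sup>2) / (p * r + q)
      \<le> (1 - \<beta>) / 2 * ((1 + \<beta>) / \<beta> * (L\<^sup>2 + \<sigma>\<^sup>2) + (1 + \<beta>) * r\<^sup>2) / (p * r + q)"
    using power2_add_weighted_le[OF \<beta>(1)] \<beta> pos by (intro divide_right_mono mult_left_mono) auto
  also have "\<dots> = (1 - \<beta>\<^sup>2) * (L\<^sup>2 + \<sigma>\<^sup>2) / (2 * \<beta>) / (p * r + q) + (1 - \<beta>\<^sup>2) / 2 * (r\<^sup>2 / (p * r + q))"
  proof -
    define D where "D = p * r + q"
    have eq: "1 - \<beta>\<^sup>2 = (1 - \<beta>) * (1 + \<beta>)"
      by (simp add: power2_eq_square algebra_simps)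
    show ?thesis
      unfolding eq D_def[symmetric] using \<beta> pos[folded D_def] by (simp add: field_simps)
  qed
  also have "(1 - \<beta>\<^sup>2) * (L\<^sup>2 + \<sigma>\<^sup>2) / (2 * \<beta>) / (p * r + q) \<le> (1 - \<beta>\<^sup>2) * (L\<^sup>2 + \<sigma>\<^sup>2) / (2 * \<beta>) / q"
    using \<beta> p q r pos by (intro divide_left_mono divide_nonneg_pos mult_nonneg_nonneg)
      (auto simp: power_le_one)
  finally show ?thesis
    by (simp add: mult.commute)
qed

lemma cubic_rate_inequality:
  fixes \<beta> X :: real
  assumes \<beta>: "0 < \<beta>" "\<beta> < 1" and X: "0 < X" "X \<le> 1"
  shows "X * \<beta> * (1 - 2 * \<beta> - 2 * \<beta> ^ 3) \<le> (1 - \<beta>)\<^sup>2 * (1 - \<beta> + 2 * \<beta>\<^sup>2)"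
proof (cases "1 - 2 * \<beta> - 2 * \<beta> ^ 3 \<le> 0")
  case True
  then have "X * \<beta> * (1 - 2 * \<beta> - 2 * \<beta> ^ 3) \<le> 0"
    using X \<beta> by (intro mult_nonneg_nonpos) auto
  also have "0 \<le> (1 - \<beta>)\<^sup>2 * (1 - \<beta> + 2 * \<beta>\<^sup>2)"
    using \<beta> by (intro mult_nonneg_nonneg) auto
  finally show ?thesis .
next
  case False
  then have "X * \<beta> * (1 - 2 * \<beta> - 2 * \<beta> ^ 3) \<le> \<beta> * (1 - 2 * \<beta> - 2 * \<beta> ^ 3)"
    using X \<beta> by (intro mult_right_mono) auto
  moreover have "(1 - \<beta>)\<^sup>2 * (1 - \<beta> + 2 * \<beta>\<^sup>2) - \<beta> * (1 - 2 * \<beta> - 2 * \<beta> ^ 3)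
      = (1 - 2 * \<beta>)\<^sup>2 + \<beta>\<^sup>2 * (4 * (\<beta> - 5 / 8)\<^sup>2 + 23 / 16)"
    by (simp add: power2_eq_square power3_eq_cube algebra_simps)
  moreover have "0 \<le> (1 - 2 * \<beta>)\<^sup>2 + \<beta>\<^sup>2 * (4 * (\<beta> - 5 / 8)\<^sup>2 + 23 / 16)"
    by simp
  ultimately show ?thesis
    by linarith
qed

lemma momentum_rate_terms_le:
  fixes \<beta> X g :: real
  assumes \<beta>: "0 < \<beta>" "\<beta> < 1" and X: "0 < X" "X \<le> 1" and g: "0 \<le> g"
  shows "X * g / ((1 + \<beta>\<^sup>2) * (1 - \<beta>)) + (1 - \<beta>\<^sup>2) * g / (\<beta> * (1 + \<beta>\<^sup>2))
    \<le> 2 * \<beta> * X * g / (1 - \<beta>) + 2 * (1 - \<beta>) * g / \<beta>"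
proof -
  define a where "a = 1 - \<beta>"
  define b where "b = 1 + \<beta>\<^sup>2"
  define D where "D = \<beta> * a * b"
  have a: "0 < a" and b: "0 < b"
    unfolding a_def b_def using \<beta> by (auto simp: add_pos_nonneg)
  have D: "0 < D"
    unfolding D_def using \<beta> a b by simp
  have eq: "1 - \<beta>\<^sup>2 = a * (1 + \<beta>)"
    unfolding a_def by (simp add: power2_eq_square algebra_simps)
  have lhs: "X * g / (b * a) + (1 - \<beta>\<^sup>2) * g / (\<beta> * b) = (X * g * \<beta> + a\<^sup>2 * (1 + \<beta>) * g) / D"
    unfolding eq D_def using \<beta> a b by (simp add: field_simps power2_eq_square)
  have rhs: "2 * \<beta> * X * g / a + 2 * a * g / \<beta> = (2 * \<beta>\<^sup>2 * X * g * b + 2 * a\<^sup>2 * b * g) / D"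
    unfolding D_def using \<beta> a b by (simp add: field_simps power2_eq_square)
  have "g * (X * \<beta> * (1 - 2 * \<beta> - 2 * \<beta> ^ 3)) \<le> g * ((1 - \<beta>)\<^sup>2 * (1 - \<beta> + 2 * \<beta>\<^sup>2))"
    using cubic_rate_inequality[OF \<beta> X] g by (rule mult_left_mono)
  moreover have "(2 * \<beta>\<^sup>2 * X * g * b + 2 * a\<^sup>2 * b * g) - (X * g * \<beta> + a\<^sup>2 * (1 + \<beta>) * g)
      = g * ((1 - \<beta>)\<^sup>2 * (1 - \<beta> + 2 * \<beta>\<^sup>2)) - g * (X * \<beta> * (1 - 2 * \<beta> - 2 * \<beta> ^ 3))"
    unfolding a_def b_def by (simp add: algebra_simps power2_eq_square power3_eq_cube)
  ultimately show ?thesis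
    unfolding a_def[symmetric] b_def[symmetric] lhs rhs using D by (intro divide_right_mono) auto
qed

lemma ingd_rate_bound:
  fixes \<beta> q \<Delta> g :: real and T :: nat
  assumes \<beta>: "0 < \<beta>" "\<beta> < 1" and q: "0 < q" and \<Delta>: "0 \<le> \<Delta>" and g: "0 \<le> g" and T: "1 \<le> T"
  shows "2 * q / (1 + \<beta>\<^sup>2) * (\<Delta> + g / (2 * q * (1 - \<beta>)) + real T * ((1 - \<beta>\<^sup>2) * g / (2 * \<beta> * q))) / real T
    \<le> 4 * q * \<Delta> / real T + 2 * \<beta> * g / (real T * (1 - \<beta>)) + 2 * (1 - \<beta>) * g / \<beta>"
proof -
  define X where "X = 1 / real T"
  have X: "0 < X" "X \<le> 1"
    unfolding X_def using T by auto
  have nz: "\<beta> \<noteq> 0" "1 - \<beta> \<noteq> 0" "1 + \<beta>\<^sup>2 \<noteq> 0" "q \<noteq> 0" "real T \<noteq> 0"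
    using \<beta> q T by (auto simp: add_pos_nonneg less_imp_neq[symmetric])
  have second_term: "2 * q / (1 + \<beta>\<^sup>2) * (g / (2 * q * (1 - \<beta>))) / real T = X * g / ((1 + \<beta>\<^sup>2) * (1 - \<beta>))"
  proof -
    have "2 * q / b * (g / (2 * q * a)) / real T = X * g / (b * a)" if "a \<noteq> 0" "b \<noteq> 0" for a b
      unfolding X_def using that nz by (simp add: field_simps)
    then show ?thesis
      using nz by simp
  qed
  have third_term: "2 * q / (1 + \<beta>\<^sup>2) * ((1 - \<beta>\<^sup>2) * g / (2 * \<beta> * q)) = (1 - \<beta>\<^sup>2) * g / (\<beta> * (1 + \<beta>\<^sup>2))"
  proof -
    have "2 * q / b * (c / (2 * \<beta> * q)) = c / (\<beta> * b)" if "b \<noteq> 0" for b c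
      using that nz by (simp add: field_simps)
    then show ?thesis
      using nz by simp
  qed
  have first_term: "2 * q * \<Delta> / ((1 + \<beta>\<^sup>2) * real T) \<le> 4 * q * \<Delta> / real T"
  proof -
    have "2 * q * \<Delta> / ((1 + \<beta>\<^sup>2) * real T) \<le> 2 * q * \<Delta> / real T"
      using q \<Delta> T by (intro divide_left_mono) (auto simp: add_pos_nonneg)
    also have "\<dots> \<le> 4 * q * \<Delta> / real T"
      using q \<Delta> by (intro divide_right_mono) auto
    finally show ?thesis .
  qed
  have "2 * q / (1 + \<beta>\<^sup>2) * (\<Delta> + g / (2 * q * (1 - \<beta>)) + real T * ((1 - \<beta>\<^sup>2) * g / (2 * \<beta> * q))) / real T
      = 2 * q * \<Delta> / ((1 + \<beta>\<^sup>2) * real T) + 2 * q / (1 + \<beta>\<^sup>2) * (g / (2 * q * (1 - \<beta>))) / real T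
        + 2 * q / (1 + \<beta>\<^sup>2) * ((1 - \<beta>\<^sup>2) * g / (2 * \<beta> * q))"
    using nz by (simp add: add_divide_distrib distrib_left)
  also have "\<dots> \<le> 4 * q * \<Delta> / real T + (2 * \<beta> * X * g / (1 - \<beta>) + 2 * (1 - \<beta>) * g / \<beta>)"
    using first_term momentum_rate_terms_le[OF \<beta> X g] unfolding second_term third_term by linarith
  finally show ?thesis
    unfolding X_def by (simp add: add.assoc)
qed

section \<open>The descent argument\<close>

locale stochastic_ingd =
  fixes f :: "'a::euclidean_space \<Rightarrow> real" and Orc :: "'a \<Rightarrow> 'a \<Rightarrow> 'a measure"
    and x0 :: 'a and \<Delta> L \<sigma> \<beta> p q :: real
  assumes lip: "lipschitz_on L UNIV f"
    and gap: "\<forall>x. f x0 - f x \<le> \<Delta>"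
    and orc_dist: "\<forall>x d. Orc x d \<in> space (prob_algebra borel)"
    and orc_meas: "(\<lambda>(x, d). Orc x d) \<in> borel \<rightarrow>\<^sub>M prob_algebra borel"
    and orc: "\<forall>x d. \<exists>gx. gx \<in> clarke_subdiff f x
                     \<and> has_hadamard_dd f x d (gx \<bullet> d)
                     \<and> has_bochner_integral (Orc x d) (\<lambda>v. v) gx
                     \<and> (\<integral>\<^sup>+ v. ennreal ((norm (v - gx))\<^sup>2) \<partial>(Orc x d)) \<le> ennreal (\<sigma>\<^sup>2)"
    and \<beta>: "0 < \<beta>" "\<beta> < 1" and p: "0 < p" and q: "0 < q"
begin

definition oracle_mean :: "'a \<Rightarrow> 'a \<Rightarrow> 'a" where
  "oracle_mean x d = (\<integral>v. v \<partial>Orc x d)"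

lemma
  shows has_bochner_integral_oracle_mean: "has_bochner_integral (Orc x d) (\<lambda>v. v) (oracle_mean x d)"
    and oracle_mean_clarke: "oracle_mean x d \<in> clarke_subdiff f x"
    and oracle_mean_hadamard: "has_hadamard_dd f x d (oracle_mean x d \<bullet> d)"
    and oracle_variance: "(\<integral>\<^sup>+ v. ennreal ((norm (v - oracle_mean x d))\<^sup>2) \<partial>Orc x d) \<le> ennreal (\<sigma>\<^sup>2)"
proof -
  obtain gx where gx: "gx \<in> clarke_subdiff f x" "has_hadamard_dd f x d (gx \<bullet> d)"
      "has_bochner_integral (Orc x d) (\<lambda>v. v) gx"
      "(\<integral>\<^sup>+ v. ennreal ((norm (v - gx))\<^sup>2) \<partial>(Orc x d)) \<le> ennreal (\<sigma>\<^sup>2)"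
    using orc by blast
  moreover have "oracle_mean x d = gx"
    unfolding oracle_mean_def using gx(3) by (rule has_bochner_integral_integral_eq)
  ultimately show "has_bochner_integral (Orc x d) (\<lambda>v. v) (oracle_mean x d)"
    "oracle_mean x d \<in> clarke_subdiff f x" "has_hadamard_dd f x d (oracle_mean x d \<bullet> d)"
    "(\<integral>\<^sup>+ v. ennreal ((norm (v - oracle_mean x d))\<^sup>2) \<partial>Orc x d) \<le> ennreal (\<sigma>\<^sup>2)"
    by simp_all
qed

lemma norm_oracle_mean_le: "norm (oracle_mean x d) \<le> L"
  using lip oracle_mean_clarke by (rule clarke_subdiff_norm_le)

lemma oracle_mean_measurable [measurable]: "(\<lambda>x. oracle_mean x d) \<in> borel_measurable borel"
proof -
  have "(\<lambda>x. (x, d)) \<in> borel \<rightarrow>\<^sub>M borel \<Otimes>\<^sub>M borel"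
    by measurable
  from measurable_compose[OF this orc_meas[unfolded borel_prod[symmetric]]]
  have "(\<lambda>x. Orc x d) \<in> borel \<rightarrow>\<^sub>M subprob_algebra borel"
    by (simp add: measurable_prob_algebraD)
  from measurable_compose[OF this integral_measurable_subprob_algebra[OF measurable_ident]] show ?thesis
    unfolding oracle_mean_def by (simp add: id_def)
qed

text \<open>\<open>f x0 - \<Delta>\<close> plays the role of \<open>inf f\<close>: by \<open>gap\<close> it is a lower bound of \<open>f\<close>.\<close>

definition lyapunov :: "'a \<times> 'a \<Rightarrow> real" where
  "lyapunov s = f (fst s) - f x0 + \<Delta> + momentum_potential p q (norm (snd s)) / (2 * (1 - \<beta>))"

lemma lyapunov_nonneg: "0 \<le> lyapunov s"
proof -
  have "0 \<le> momentum_potential p q (norm (snd s))"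
    using p q by (rule momentum_potential_nonneg) simp
  moreover have "0 \<le> f (fst s) - f x0 + \<Delta>"
    using gap by (simp add: algebra_simps)
  ultimately show ?thesis
    unfolding lyapunov_def using \<beta> by simp
qed

lemma lyapunov_measurable [measurable]: "lyapunov \<in> borel_measurable borel"
proof -
  have [measurable]: "f \<in> borel_measurable borel"
    using lip by (intro borel_measurable_continuous_onI lipschitz_on_continuous_on)
  show ?thesis
    unfolding lyapunov_def momentum_potential_def borel_prod[symmetric] by measurable
qed

definition descent_gain :: "'a \<times> 'a \<Rightarrow> real" where
  "descent_gain s = (norm (snd s))\<^sup>2 / (p * norm (snd s) + q)"

lemma descent_gain_nonneg: "0 \<le> descent_gain s"
  unfolding descent_gain_def using p q by (simp add: add_nonneg_pos)

lemma descent_gain_measurable [measurable]: "descent_gain \<in> borel_measurable borel"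
proof -
  have "continuous_on UNIV descent_gain"
    unfolding descent_gain_def[abs_def] using p q
    by (intro continuous_intros) (auto simp: add_nonneg_pos less_imp_neq[symmetric])
  then show ?thesis
    by (rule borel_measurable_continuous_onI)
qed

lemma lyapunov_update_le:
  assumes \<eta>: "\<eta> = 1 / (p * norm m + q)"
  shows "lyapunov (x - \<eta> *\<^sub>R m, \<beta> *\<^sub>R m + (1 - \<beta>) *\<^sub>R g)
    \<le> lyapunov (x, m) + f (x - \<eta> *\<^sub>R m) - f x - \<eta> * (norm m)\<^sup>2 + (\<eta> *\<^sub>R m) \<bullet> g
      + (1 - \<beta>) / 2 * \<eta> * (norm (g - m))\<^sup>2"
  using momentum_potential_update_le[OF p q \<beta>(2), of m g]
  unfolding lyapunov_def \<eta> by (simp add: add_divide_distrib diff_divide_distrib algebra_simps)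

lemma nn_integral_lyapunov_query_le:
  fixes x y m :: 'a and \<eta> :: real
  assumes \<eta>: "\<eta> = 1 / (p * norm m + q)" and "0 < \<eta>"
  defines "B \<equiv> lyapunov (x, m) + f (x - \<eta> *\<^sub>R m) - f x - \<eta> * (norm m)\<^sup>2
      - \<eta> * (oracle_mean y (- m) \<bullet> (- m)) + (1 - \<beta>) / 2 * \<eta> * ((L + norm m)\<^sup>2 + \<sigma>\<^sup>2)"
  shows "(\<integral>\<^sup>+ g. ennreal (lyapunov (x - \<eta> *\<^sub>R m, \<beta> *\<^sub>R m + (1 - \<beta>) *\<^sub>R g)) \<partial>Orc y (- m)) \<le> ennreal B"
    and "0 \<le> B"
proof -
  define C where "C = lyapunov (x, m) + f (x - \<eta> *\<^sub>R m) - f x - \<eta> * (norm m)\<^sup>2"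
  define \<mu> where "\<mu> = oracle_mean y (- m)"
  have \<kappa>: "0 \<le> (1 - \<beta>) / 2 * \<eta>"
    using \<beta> \<open>0 < \<eta>\<close> by simp
  have "lyapunov (x - \<eta> *\<^sub>R m, \<beta> *\<^sub>R m + (1 - \<beta>) *\<^sub>R g)
      \<le> C + (\<eta> *\<^sub>R m) \<bullet> g + (1 - \<beta>) / 2 * \<eta> * (norm (g - m))\<^sup>2" for g
    unfolding C_def using lyapunov_update_le[OF \<eta>] by simp
  note majorant = nn_integral_le_quadratic_majorant
    [where F = "\<lambda>g. lyapunov (x - \<eta> *\<^sub>R m, \<beta> *\<^sub>R m + (1 - \<beta>) *\<^sub>R g)",
      OF orc_dist[rule_format] has_bochner_integral_oracle_mean[of y "- m"] oracle_variance[of y "- m"]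
      lyapunov_nonneg this \<kappa>]
  have "norm (\<mu> - m) \<le> L + norm m"
    using norm_triangle_ineq4[of \<mu> m] norm_oracle_mean_le[of y "- m"] unfolding \<mu>_def by simp
  then have "(1 - \<beta>) / 2 * \<eta> * ((norm (\<mu> - m))\<^sup>2 + \<sigma>\<^sup>2) \<le> (1 - \<beta>) / 2 * \<eta> * ((L + norm m)\<^sup>2 + \<sigma>\<^sup>2)"
    using \<kappa> by (intro mult_left_mono add_right_mono power_mono) auto
  moreover have "(\<eta> *\<^sub>R m) \<bullet> \<mu> = - \<eta> * (\<mu> \<bullet> (- m))"
    by (simp add: inner_commute)
  ultimately have "C + (\<eta> *\<^sub>R m) \<bullet> \<mu> + (1 - \<beta>) / 2 * \<eta> * ((norm (\<mu> - m))\<^sup>2 + \<sigma>\<^sup>2) \<le> B"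
    unfolding B_def C_def \<mu>_def by linarith
  with majorant show "(\<integral>\<^sup>+ g. ennreal (lyapunov (x - \<eta> *\<^sub>R m, \<beta> *\<^sub>R m + (1 - \<beta>) *\<^sub>R g)) \<partial>Orc y (- m)) \<le> ennreal B"
    and "0 \<le> B"
    unfolding \<mu>_def by (auto intro: order_trans ennreal_leI)
qed

text \<open>The oracle is queried at a uniform point of the segment of the step, so its directional
  derivatives average to the increment of \<open>f\<close> along that segment.\<close>

lemma nn_integral_lyapunov_step_le:
  fixes x m :: 'a and \<eta> :: real
  assumes \<eta>: "\<eta> = 1 / (p * norm m + q)"
  defines "I \<equiv> lyapunov (x, m) - \<eta> * (norm m)\<^sup>2 + (1 - \<beta>) / 2 * \<eta> * ((L + norm m)\<^sup>2 + \<sigma>\<^sup>2)"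
  shows "(\<integral>\<^sup>+ s. ennreal (lyapunov s) \<partial>ingd_step Orc p q \<beta> (x, m)) \<le> ennreal I"
    and "0 \<le> I"
proof -
  have "0 < \<eta>"
    unfolding \<eta> using p q by (simp add: add_nonneg_pos)
  define y where "y u = x + (u * \<eta>) *\<^sub>R (- m)" for u
  define B where "B u = I + f (x - \<eta> *\<^sub>R m) - f x - \<eta> * (oracle_mean (y u) (- m) \<bullet> (- m))" for u
  have B_bound: "(\<integral>\<^sup>+ g. ennreal (lyapunov (x - \<eta> *\<^sub>R m, \<beta> *\<^sub>R m + (1 - \<beta>) *\<^sub>R g)) \<partial>Orc (y u) (- m))
      \<le> ennreal (B u) \<and> 0 \<le> B u" for u
    using nn_integral_lyapunov_query_le[OF \<eta> \<open>0 < \<eta>\<close>, where x = x and y = "y u"] unfolding B_def I_def by argo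
  have "((\<lambda>u. \<eta> * (oracle_mean (y u) (- m) \<bullet> (- m))) has_integral f (x + \<eta> *\<^sub>R (- m)) - f x) {0..1}"
    unfolding y_def using oracle_mean_hadamard by (rule hadamard_segment_has_integral[OF lip \<open>0 < \<eta>\<close>])
  then have "(B has_integral measure lborel {0..1::real} *\<^sub>R (I + f (x - \<eta> *\<^sub>R m) - f x) - (f (x + \<eta> *\<^sub>R (- m)) - f x)) {0..1}"
    unfolding B_def[abs_def] by (rule has_integral_diff[OF has_integral_const_real])
  then have "(B has_integral I) {0..1}"
    by simp
  moreover have "B \<in> borel_measurable borel"
    unfolding B_def y_def by measurable
  ultimately have B_integral: "(\<integral>\<^sup>+ u. ennreal (B u) \<partial>uniform_measure lborel {0..1}) = ennreal I"
    using B_bound by (intro nn_integral_uniform_unit_interval) auto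
  then show "0 \<le> I"
    using has_integral_nonneg[OF \<open>(B has_integral I) {0..1}\<close>] B_bound by auto
  have "(\<integral>\<^sup>+ s. ennreal (lyapunov s) \<partial>ingd_step Orc p q \<beta> (x, m))
      = (\<integral>\<^sup>+ u. (\<integral>\<^sup>+ g. ennreal (lyapunov (x - \<eta> *\<^sub>R m, \<beta> *\<^sub>R m + (1 - \<beta>) *\<^sub>R g)) \<partial>Orc (y u) (- m))
          \<partial>uniform_measure lborel {0..1})"
    unfolding y_def by (simp add: nn_integral_ingd_step[OF orc_meas _ \<eta>])
  also have "\<dots> \<le> (\<integral>\<^sup>+ u. ennreal (B u) \<partial>uniform_measure lborel {0..1})"
    using B_bound by (intro nn_integral_mono) blast
  finally show "(\<integral>\<^sup>+ s. ennreal (lyapunov s) \<partial>ingd_step Orc p q \<beta> (x, m)) \<le> ennreal I"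
    unfolding B_integral .
qed

lemma ingd_drift:
  "(\<integral>\<^sup>+ s'. ennreal (lyapunov s') \<partial>ingd_step Orc p q \<beta> s) + ennreal ((1 + \<beta>\<^sup>2) / 2 * descent_gain s)
    \<le> ennreal (lyapunov s) + ennreal ((1 - \<beta>\<^sup>2) * (L\<^sup>2 + \<sigma>\<^sup>2) / (2 * \<beta> * q))"
proof -
  obtain x m where s: "s = (x, m)"
    by (cases s)
  define K where "K = (1 - \<beta>\<^sup>2) * (L\<^sup>2 + \<sigma>\<^sup>2) / (2 * \<beta> * q)"
  define c where "c = (1 + \<beta>\<^sup>2) / 2 * descent_gain s"
  define I where "I = lyapunov s - descent_gain s + (1 - \<beta>) / 2 * ((L + norm m)\<^sup>2 + \<sigma>\<^sup>2) / (p * norm m + q)"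
  have step: "(\<integral>\<^sup>+ s'. ennreal (lyapunov s') \<partial>ingd_step Orc p q \<beta> s) \<le> ennreal I" "0 \<le> I"
    using nn_integral_lyapunov_step_le[OF refl, of x m] unfolding I_def s descent_gain_def by simp_all
  have "(1 - \<beta>\<^sup>2) / 2 * t + (1 + \<beta>\<^sup>2) / 2 * t = t" for t :: real
    by (simp add: field_simps)
  from this[of "descent_gain s"]
  have drift: "I + c \<le> lyapunov s + K"
    using drift_constant_bound[OF \<beta> p q norm_ge_zero, of L m \<sigma>]
    unfolding I_def K_def c_def s descent_gain_def by simp
  have "0 \<le> c" "0 \<le> K"
    unfolding c_def K_def using \<beta> q descent_gain_nonneg by (auto simp: power_le_one)
  have "(\<integral>\<^sup>+ s'. ennreal (lyapunov s') \<partial>ingd_step Orc p q \<beta> s) + ennreal c \<le> ennreal I + ennreal c"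
    using step(1) by (rule add_right_mono)
  also have "\<dots> = ennreal (I + c)"
    using step(2) \<open>0 \<le> c\<close> by simp
  also have "\<dots> \<le> ennreal (lyapunov s + K)"
    using drift by (rule ennreal_leI)
  also have "\<dots> = ennreal (lyapunov s) + ennreal K"
    using lyapunov_nonneg \<open>0 \<le> K\<close> by simp
  finally show ?thesis
    unfolding c_def K_def .
qed

lemma lyapunov_initial_le:
  "(\<integral>\<^sup>+ s. ennreal (lyapunov s) \<partial>ingd_state Orc p q \<beta> x0 0) \<le> ennreal (\<Delta> + (L\<^sup>2 + \<sigma>\<^sup>2) / (2 * q * (1 - \<beta>)))"
proof -
  define M where "M = Orc x0 0"
  define k where "k = 1 / (2 * q * (1 - \<beta>))"
  have M: "M \<in> space (prob_algebra borel)"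
    unfolding M_def using orc_dist by simp
  then interpret prob_space M
    by (simp add: space_prob_algebra)
  have [measurable_cong]: "sets M = sets borel"
    using M by (simp add: space_prob_algebra)
  have k: "0 \<le> k"
    unfolding k_def using q \<beta> by simp
  have \<Delta>: "0 \<le> \<Delta>"
    using gap[rule_format, of x0] by simp
  note second_moment = integral_norm_diff_sq_le[OF M, unfolded M_def,
      OF has_bochner_integral_oracle_mean oracle_variance, of 0, folded M_def]
  have "(\<lambda>g. (x0, g)) \<in> M \<rightarrow>\<^sub>M borel"
    unfolding borel_prod[symmetric] by measurable
  then have "(\<integral>\<^sup>+ s. ennreal (lyapunov s) \<partial>ingd_state Orc p q \<beta> x0 0) = (\<integral>\<^sup>+ g. ennreal (lyapunov (x0, g)) \<partial>M)"
    unfolding M_def ingd_state.simps by (rule nn_integral_distr) (simp_all add: M_def)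
  also have "\<dots> \<le> (\<integral>\<^sup>+ g. ennreal (\<Delta> + k * (norm (g - 0))\<^sup>2) \<partial>M)"
  proof (intro nn_integral_mono ennreal_leI)
    fix g :: 'a
    have "momentum_potential p q (norm g) / (2 * (1 - \<beta>)) \<le> (norm g)\<^sup>2 / q / (2 * (1 - \<beta>))"
      using momentum_potential_le[OF p q norm_ge_zero] \<beta> by (intro divide_right_mono) auto
    also have "(norm g)\<^sup>2 / q / (2 * (1 - \<beta>)) = k * (norm (g - 0))\<^sup>2"
      unfolding k_def by simp
    finally show "lyapunov (x0, g) \<le> \<Delta> + k * (norm (g - 0))\<^sup>2"
      unfolding lyapunov_def by simp
  qed
  also have "\<dots> = ennreal (\<Delta> + k * (\<integral>g. (norm (g - 0))\<^sup>2 \<partial>M))"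
    using second_moment(1) \<Delta> k by (subst nn_integral_eq_integral) (auto simp: prob_space)
  also have "\<dots> \<le> ennreal (\<Delta> + k * (L\<^sup>2 + \<sigma>\<^sup>2))"
  proof (intro ennreal_leI add_left_mono mult_left_mono k)
    have "(norm (oracle_mean x0 0))\<^sup>2 \<le> L\<^sup>2"
      using norm_oracle_mean_le by (intro power_mono) auto
    then show "(\<integral>g. (norm (g - 0))\<^sup>2 \<partial>M) \<le> L\<^sup>2 + \<sigma>\<^sup>2"
      using second_moment(2) by simp
  qed
  finally show ?thesis
    unfolding k_def by simp
qed

lemma drift_sum_le:
  "(\<Sum>t<T. \<integral>\<^sup>+ s. ennreal ((1 + \<beta>\<^sup>2) / 2 * descent_gain s) \<partial>ingd_state Orc p q \<beta> x0 t)
    \<le> ennreal (\<Delta> + (L\<^sup>2 + \<sigma>\<^sup>2) / (2 * q * (1 - \<beta>)) + real T * ((1 - \<beta>\<^sup>2) * (L\<^sup>2 + \<sigma>\<^sup>2) / (2 * \<beta> * q)))"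
proof -
  define A where "A = \<Delta> + (L\<^sup>2 + \<sigma>\<^sup>2) / (2 * q * (1 - \<beta>))"
  define K where "K = (1 - \<beta>\<^sup>2) * (L\<^sup>2 + \<sigma>\<^sup>2) / (2 * \<beta> * q)"
  have A: "0 \<le> A" and K: "0 \<le> K"
    unfolding K_def A_def using \<beta> q gap[rule_format, of x0] by (simp_all add: power_le_one)
  have "(\<integral>\<^sup>+ s. ennreal (lyapunov s) \<partial>ingd_state Orc p q \<beta> x0 T)
      + (\<Sum>t<T. \<integral>\<^sup>+ s. ennreal ((1 + \<beta>\<^sup>2) / 2 * descent_gain s) \<partial>ingd_state Orc p q \<beta> x0 t)
    \<le> (\<integral>\<^sup>+ s. ennreal (lyapunov s) \<partial>ingd_state Orc p q \<beta> x0 0) + of_nat T * ennreal K"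
    unfolding K_def
    by (rule nn_integral_drift_telescope[where S = "ingd_state Orc p q \<beta> x0" and k = "ingd_step Orc p q \<beta>",
          OF ingd_state_prob_algebra[OF orc_dist orc_meas] ingd_state.simps(2) ingd_step_measurable[OF orc_meas]])
      (measurable, measurable, rule ingd_drift)
  then have "(\<Sum>t<T. \<integral>\<^sup>+ s. ennreal ((1 + \<beta>\<^sup>2) / 2 * descent_gain s) \<partial>ingd_state Orc p q \<beta> x0 t)
    \<le> (\<integral>\<^sup>+ s. ennreal (lyapunov s) \<partial>ingd_state Orc p q \<beta> x0 0) + of_nat T * ennreal K"
    by (rule order_trans[rotated]) simp
  also have "\<dots> \<le> ennreal A + of_nat T * ennreal K"
    using lyapunov_initial_le unfolding A_def by (rule add_right_mono)
  also have "\<dots> = ennreal (A + real T * K)"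
    using A K by (simp add: ennreal_mult ennreal_of_nat_eq_real_of_nat)
  finally show ?thesis
    unfolding A_def K_def .
qed

lemma momentum_sum_le:
  "(\<Sum>t<T. \<integral>\<^sup>+ s. ennreal (q * (norm (snd s))\<^sup>2 / (p * norm (snd s) + q)) \<partial>ingd_state Orc p q \<beta> x0 t)
    \<le> ennreal (2 * q / (1 + \<beta>\<^sup>2)
        * (\<Delta> + (L\<^sup>2 + \<sigma>\<^sup>2) / (2 * q * (1 - \<beta>)) + real T * ((1 - \<beta>\<^sup>2) * (L\<^sup>2 + \<sigma>\<^sup>2) / (2 * \<beta> * q))))"
proof -
  define \<kappa> where "\<kappa> = 2 * q / (1 + \<beta>\<^sup>2)"
  have "0 < 1 + \<beta>\<^sup>2"
    by (simp add: add_pos_nonneg)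
  then have \<kappa>: "0 \<le> \<kappa>"
    unfolding \<kappa>_def using q by simp
  have "q * t = \<kappa> * ((1 + \<beta>\<^sup>2) / 2 * t)" for t
    unfolding \<kappa>_def using \<open>0 < 1 + \<beta>\<^sup>2\<close> by simp
  then have real_eq: "q * (norm (snd s))\<^sup>2 / (p * norm (snd s) + q) = \<kappa> * ((1 + \<beta>\<^sup>2) / 2 * descent_gain s)" for s
    unfolding descent_gain_def by (simp only: times_divide_eq_right[symmetric])
  have eq: "ennreal (q * (norm (snd s))\<^sup>2 / (p * norm (snd s) + q))
      = ennreal \<kappa> * ennreal ((1 + \<beta>\<^sup>2) / 2 * descent_gain s)" for s
    unfolding real_eq by (rule ennreal_mult'[OF \<kappa>])
  have "(\<lambda>s. ennreal ((1 + \<beta>\<^sup>2) / 2 * descent_gain s)) \<in> borel_measurable (ingd_state Orc p q \<beta> x0 t)" for t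
    using ingd_state_prob_algebra[OF orc_dist orc_meas, of p q \<beta> x0 t]
    by (simp add: space_prob_algebra cong: measurable_cong_sets)
  then have "(\<Sum>t<T. \<integral>\<^sup>+ s. ennreal (q * (norm (snd s))\<^sup>2 / (p * norm (snd s) + q)) \<partial>ingd_state Orc p q \<beta> x0 t)
      = (\<Sum>t<T. ennreal \<kappa> * \<integral>\<^sup>+ s. ennreal ((1 + \<beta>\<^sup>2) / 2 * descent_gain s) \<partial>ingd_state Orc p q \<beta> x0 t)"
    unfolding eq by (intro sum.cong refl nn_integral_cmult)
  also have "\<dots> = ennreal \<kappa> * (\<Sum>t<T. \<integral>\<^sup>+ s. ennreal ((1 + \<beta>\<^sup>2) / 2 * descent_gain s) \<partial>ingd_state Orc p q \<beta> x0 t)"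
    by (rule sum_distrib_left[symmetric])
  also have "\<dots> \<le> ennreal \<kappa> * ennreal (\<Delta> + (L\<^sup>2 + \<sigma>\<^sup>2) / (2 * q * (1 - \<beta>))
      + real T * ((1 - \<beta>\<^sup>2) * (L\<^sup>2 + \<sigma>\<^sup>2) / (2 * \<beta> * q)))"
    by (intro mult_left_mono drift_sum_le) simp
  also have "\<dots> = ennreal (\<kappa> * (\<Delta> + (L\<^sup>2 + \<sigma>\<^sup>2) / (2 * q * (1 - \<beta>))
      + real T * ((1 - \<beta>\<^sup>2) * (L\<^sup>2 + \<sigma>\<^sup>2) / (2 * \<beta> * q))))"
    by (rule ennreal_mult'[OF \<kappa>, symmetric])
  finally show ?thesis
    unfolding \<kappa>_def .
qed

end

theorem mainTheorem9:
  fixes f :: "'a::euclidean_space \<Rightarrow> real"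
    and Orc :: "'a \<Rightarrow> 'a \<Rightarrow> 'a measure"
    and x0 :: 'a
    and \<Delta> L \<sigma> G \<beta> p q :: real
    and T :: nat
  assumes lip: "lipschitz_on L UNIV f"
    and hdd: "hadamard_dir_differentiable f"
    and gap: "\<forall>x. f x0 - f x \<le> \<Delta>"
    and orc_dist: "\<forall>x d. Orc x d \<in> space (prob_algebra borel)"
    and orc_meas: "(\<lambda>(x, d). Orc x d) \<in> borel \<rightarrow>\<^sub>M prob_algebra borel"
    and orc: "\<forall>x d. \<exists>gx. gx \<in> clarke_subdiff f x
                     \<and> has_hadamard_dd f x d (gx \<bullet> d)
                     \<and> has_bochner_integral (Orc x d) (\<lambda>v. v) gx
                     \<and> (\<integral>\<^sup>+ v. ennreal ((norm (v - gx))\<^sup>2) \<partial>(Orc x d)) \<le> ennreal (\<sigma>\<^sup>2)"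
    and G_def: "G = sqrt (L\<^sup>2 + \<sigma>\<^sup>2)"
    and \<beta>: "0 < \<beta>" "\<beta> < 1"
    and pq: "0 < p" "0 < q" "p * G / q \<le> \<beta> / 2"
    and T: "1 \<le> T"
  shows "ennreal (1 / real T) *
           (\<Sum>t<T. \<integral>\<^sup>+ s. ennreal (q * (norm (snd s))\<^sup>2 / (p * norm (snd s) + q))
                      \<partial>(ingd_state Orc p q \<beta> x0 t))
         \<le> ennreal (4 * q * \<Delta> / real T + 2 * \<beta> * G\<^sup>2 / (real T * (1 - \<beta>))
                    + 2 * (1 - \<beta>) * G\<^sup>2 / \<beta>)"
proof -
  interpret stochastic_ingd f Orc x0 \<Delta> L \<sigma> \<beta> p q
    using lip gap orc_dist orc_meas orc \<beta> pq(1,2) by unfold_locales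
  have "G\<^sup>2 = L\<^sup>2 + \<sigma>\<^sup>2"
    unfolding G_def by simp
  have "ennreal (1 / real T) *
          (\<Sum>t<T. \<integral>\<^sup>+ s. ennreal (q * (norm (snd s))\<^sup>2 / (p * norm (snd s) + q)) \<partial>ingd_state Orc p q \<beta> x0 t)
      \<le> ennreal (1 / real T) * ennreal (2 * q / (1 + \<beta>\<^sup>2)
          * (\<Delta> + G\<^sup>2 / (2 * q * (1 - \<beta>)) + real T * ((1 - \<beta>\<^sup>2) * G\<^sup>2 / (2 * \<beta> * q))))"
    unfolding \<open>G\<^sup>2 = L\<^sup>2 + \<sigma>\<^sup>2\<close> by (intro mult_left_mono momentum_sum_le) simp
  also have "\<dots> = ennreal (2 * q / (1 + \<beta>\<^sup>2)
      * (\<Delta> + G\<^sup>2 / (2 * q * (1 - \<beta>)) + real T * ((1 - \<beta>\<^sup>2) * G\<^sup>2 / (2 * \<beta> * q))) / real T)"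
    by (subst ennreal_mult'[symmetric]) (simp_all add: mult_ac)
  also have "\<dots> \<le> ennreal (4 * q * \<Delta> / real T + 2 * \<beta> * G\<^sup>2 / (real T * (1 - \<beta>)) + 2 * (1 - \<beta>) * G\<^sup>2 / \<beta>)"
    using gap[rule_format, of x0] by (intro ennreal_leI ingd_rate_bound[OF \<beta> pq(2) _ zero_le_power2 T]) simp
  finally show ?thesis .
qed

end
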